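(* Let $\mathbb{G},\mathbb{M}$ be graded groups, $T:\mathbb{G}\to\mathbb{M}$ an injective h-homomorphism and $H=T(\mathbb{G})$. The following are equivalent: (1) there exists a normal homogeneous subgroup $N$ of $\mathbb{M}$ complementary to $H$; (2) there exists an h-epimorphism $p:\mathbb{M}\to H$ with $p|_H=\mathrm{Id}_H$; (3) $T$ is an h-monomorphism.
   Context: Graded group: connected simply connected real Lie group with Lie algebra $V_1\oplus\cdots\oplus V_\iota$, $[V_i,V_j]\subset V_{i+j}$; dilations act by $r^i$ on $V_i$. h-homomorphism: group homomorphism commuting with dilations; h-epimorphism (resp. h-monomorphism): h-homomorphism having a right (resp. left) inverse which is an h-homomorphism. Homogeneous subgroup: closed connected simply connected Lie subgroup invariant under dilations (image $H$ is a homogeneous subgroup, itself a graded group). $N,H$ complementary: $NH=\mathbb{M}$ and $N\cap H=\{e\}$. *)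

theory Defs
  imports "HOL-Analysis.Analysis" "HOL-Algebra.Group" "HOL-Algebra.Coset"
begin

fun iter_dderiv :: "'a::euclidean_space list \<Rightarrow> ('a \<Rightarrow> 'b::euclidean_space) \<Rightarrow> 'a \<Rightarrow> 'b" where
  "iter_dderiv [] f = f"
| "iter_dderiv (v # vs) f = (\<lambda>x. frechet_derivative (iter_dderiv vs f) (at x) v)"

definition smooth_map :: "('a::euclidean_space \<Rightarrow> 'b::euclidean_space) \<Rightarrow> bool" where
  "smooth_map f \<longleftrightarrow> (\<forall>vs x. iter_dderiv vs f differentiable (at x))"

text \<open>A graded group in exponential coordinates: a Lie group structure (smooth group law)
  on the finite-dimensional real vector space 'g, together with a decomposition
  'g = V_1 + ... + V_iota given by linear projections P i, such that the dilations
  delta r = sum_i r^i P_i are group automorphisms for r > 0.\<close>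

definition graded_group :: "'g::euclidean_space monoid \<Rightarrow> (real \<Rightarrow> 'g \<Rightarrow> 'g) \<Rightarrow> bool" where
  "graded_group G \<delta> \<longleftrightarrow>
     group G \<and> carrier G = UNIV \<and>
     smooth_map (\<lambda>(x, y). x \<otimes>\<^bsub>G\<^esub> y) \<and> smooth_map (\<lambda>x. inv\<^bsub>G\<^esub> x) \<and>
     (\<exists>(\<iota>::nat) (P :: nat \<Rightarrow> 'g \<Rightarrow> 'g).
        (\<forall>i. linear (P i)) \<and>
        (\<forall>i j x. P i (P j x) = (if i = j then P i x else 0)) \<and>
        (\<forall>x. (\<Sum>i\<in>{1..\<iota>}. P i x) = x) \<and>
        (\<forall>r x. \<delta> r x = (\<Sum>i\<in>{1..\<iota>}. (r ^ i) *\<^sub>R P i x))) \<and>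
     (\<forall>r>0. \<delta> r \<in> hom G G)"

definition h_hom :: "'a::euclidean_space monoid \<Rightarrow> (real \<Rightarrow> 'a \<Rightarrow> 'a) \<Rightarrow>
    'b::euclidean_space monoid \<Rightarrow> (real \<Rightarrow> 'b \<Rightarrow> 'b) \<Rightarrow> ('a \<Rightarrow> 'b) \<Rightarrow> bool" where
  "h_hom G \<delta>G M \<delta>M f \<longleftrightarrow> f \<in> hom G M \<and> continuous_on (carrier G) f \<and>
     (\<forall>r>0. \<forall>x\<in>carrier G. f (\<delta>G r x) = \<delta>M r (f x))"

definition h_epi :: "'a::euclidean_space monoid \<Rightarrow> (real \<Rightarrow> 'a \<Rightarrow> 'a) \<Rightarrow>
    'b::euclidean_space monoid \<Rightarrow> (real \<Rightarrow> 'b \<Rightarrow> 'b) \<Rightarrow> ('a \<Rightarrow> 'b) \<Rightarrow> bool" where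
  "h_epi G \<delta>G M \<delta>M f \<longleftrightarrow> h_hom G \<delta>G M \<delta>M f \<and>
     (\<exists>g. h_hom M \<delta>M G \<delta>G g \<and> (\<forall>y\<in>carrier M. f (g y) = y))"

definition h_mono :: "'a::euclidean_space monoid \<Rightarrow> (real \<Rightarrow> 'a \<Rightarrow> 'a) \<Rightarrow>
    'b::euclidean_space monoid \<Rightarrow> (real \<Rightarrow> 'b \<Rightarrow> 'b) \<Rightarrow> ('a \<Rightarrow> 'b) \<Rightarrow> bool" where
  "h_mono G \<delta>G M \<delta>M f \<longleftrightarrow> h_hom G \<delta>G M \<delta>M f \<and>
     (\<exists>g. h_hom M \<delta>M G \<delta>G g \<and> (\<forall>x\<in>carrier G. g (f x) = x))"

text \<open>Homogeneous subgroup: closed connected simply connected subgroup invariant under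
  dilations (closed subgroups of Lie groups are embedded Lie subgroups).\<close>

definition homogeneous_subgroup :: "'g::euclidean_space monoid \<Rightarrow> (real \<Rightarrow> 'g \<Rightarrow> 'g) \<Rightarrow> 'g set \<Rightarrow> bool" where
  "homogeneous_subgroup M \<delta> S \<longleftrightarrow> subgroup S M \<and> closed S \<and> connected S \<and>
     simply_connected S \<and> (\<forall>r>0. \<delta> r ` S \<subseteq> S)"

definition complementary :: "'g monoid \<Rightarrow> 'g set \<Rightarrow> 'g set \<Rightarrow> bool" where
  "complementary M N H \<longleftrightarrow> N <#>\<^bsub>M\<^esub> H = carrier M \<and> N \<inter> H = {\<one>\<^bsub>M\<^esub>}"

end

theory Submission
  imports Defs
begin

(* An injective continuous map that commutes with dilations has a continuous inverse: a point far
   from the origin has a dilate on a fixed sphere, where the map is bounded away from zero by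
   compactness, and left translations carry continuity at the origin to every point. Applied to the
   multiplication map (n, x) |-> n T(x) from N x G onto M, this makes the projection n T(x) |-> T(x)
   an h-epimorphism retracting M onto H; applied with N trivial, it makes the inverse of T continuous
   on H, so that p |-> T^-1 o p and g |-> T o g pass between (2) and (3). Conversely, the kernel of
   a retraction p as in (2) is a normal complement of H which is closed, invariant under dilations,
   and contractible, being a retract of M. *)

lemma smooth_map_continuous: "smooth_map f \<Longrightarrow> continuous_on UNIV f"
  unfolding smooth_map_def
  by (metis iter_dderiv.simps(1) continuous_at_imp_continuous_on differentiable_imp_continuous_within)

lemma (in group) mult_inv_cancel_left [simp]:
  "x \<in> carrier G \<Longrightarrow> y \<in> carrier G \<Longrightarrow> x \<otimes> (inv x \<otimes> y) = y"
  by (simp flip: m_assoc)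

lemma (in group) inv_mult_cancel_left [simp]:
  "x \<in> carrier G \<Longrightarrow> y \<in> carrier G \<Longrightarrow> inv x \<otimes> (x \<otimes> y) = y"
  by (simp flip: m_assoc)

lemma
  assumes "graded_group G \<delta>"
  shows graded_group_group: "group G"
    and graded_group_carrier: "carrier G = UNIV"
    and graded_group_continuous_mult: "continuous_on UNIV (\<lambda>(x, y). x \<otimes>\<^bsub>G\<^esub> y)"
    and graded_group_continuous_inv: "continuous_on UNIV (\<lambda>x. inv\<^bsub>G\<^esub> x)"
    and graded_group_dilation_hom: "r > 0 \<Longrightarrow> group_hom G G (\<delta> r)"
  using assms smooth_map_continuous unfolding graded_group_def group_hom_def group_hom_axioms_def
  by blast+

lemma graded_group_dilation_expansion:
  assumes "graded_group G \<delta>"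
  obtains \<iota> :: nat and P where "\<And>i. linear (P i)" "\<And>x. (\<Sum>i\<in>{1..\<iota>}. P i x) = x"
    "\<And>r x. \<delta> r x = (\<Sum>i\<in>{1..\<iota>}. (r ^ i) *\<^sub>R P i x)"
  using assms unfolding graded_group_def by blast

lemma graded_group_dilation_1: "graded_group G \<delta> \<Longrightarrow> \<delta> 1 x = x"
  by (erule graded_group_dilation_expansion) simp

lemma graded_group_dilation_0: "graded_group G \<delta> \<Longrightarrow> \<delta> 0 x = 0"
  by (erule graded_group_dilation_expansion) (auto intro: sum.neutral)

lemma graded_group_continuous_dilation: "graded_group G \<delta> \<Longrightarrow> continuous_on S (\<lambda>r. \<delta> r x)"
  by (erule graded_group_dilation_expansion) (simp, intro continuous_intros)

lemma graded_group_dilation_bound: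
  assumes "graded_group G \<delta>"
  obtains C where "C > 0" "\<And>r x. 0 < r \<Longrightarrow> r \<le> 1 \<Longrightarrow> norm (\<delta> r x) \<le> r * C * norm x"
proof -
  obtain \<iota> :: nat and P where lin: "\<And>i. linear (P i)"
    and dil: "\<And>r x. \<delta> r x = (\<Sum>i\<in>{1..\<iota>}. (r ^ i) *\<^sub>R P i x)"
    using graded_group_dilation_expansion[OF assms] by metis
  have "\<forall>i. \<exists>B>0. \<forall>x. norm (P i x) \<le> B * norm x"
    using lin linear_bounded_pos by metis
  then obtain B where B: "\<And>i. B i > 0" "\<And>i x. norm (P i x) \<le> B i * norm x"
    by metis
  define C where "C = 1 + (\<Sum>i\<in>{1..\<iota>}. B i)"
  have C_pos: "C > 0" unfolding C_def using B(1) by (simp add: add_pos_nonneg sum_nonneg less_imp_le)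
  have bound: "norm (\<delta> r x) \<le> r * C * norm x" if r: "0 < r" "r \<le> 1" for r x
  proof -
    have "norm (\<delta> r x) \<le> (\<Sum>i\<in>{1..\<iota>}. norm ((r ^ i) *\<^sub>R P i x))"
      unfolding dil by (rule norm_sum)
    also have "\<dots> \<le> (\<Sum>i\<in>{1..\<iota>}. r * (B i * norm x))"
    proof (rule sum_mono)
      fix i :: nat assume "i \<in> {1..\<iota>}"
      then have "r ^ i \<le> r" using r power_decreasing[of 1 i r] by simp
      then show "norm ((r ^ i) *\<^sub>R P i x) \<le> r * (B i * norm x)"
        using B(2)[of i x] r by (simp add: mult_mono)
    qed
    also have "\<dots> = r * (\<Sum>i\<in>{1..\<iota>}. B i) * norm x"
      by (simp add: sum_distrib_left sum_distrib_right mult.assoc)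
    also have "\<dots> \<le> r * C * norm x"
      unfolding C_def using r by (intro mult_right_mono mult_left_mono) auto
    finally show ?thesis .
  qed
  show thesis by (rule that[OF C_pos bound])
qed

text \<open>The identity is fixed by every dilation, and the dilations contract everything to the origin.\<close>

lemma graded_group_one:
  assumes "graded_group G \<delta>"
  shows "\<one>\<^bsub>G\<^esub> = 0"
proof -
  have "continuous_on UNIV (\<lambda>r. \<delta> r \<one>\<^bsub>G\<^esub>)" by (rule graded_group_continuous_dilation[OF assms])
  then have "((\<lambda>r. \<delta> r \<one>\<^bsub>G\<^esub>) \<longlongrightarrow> \<delta> 0 \<one>\<^bsub>G\<^esub>) (at_right 0)"
    unfolding continuous_on_def by (meson UNIV_I subset_UNIV tendsto_within_subset)
  moreover have "\<forall>\<^sub>F r in at_right 0. \<delta> r \<one>\<^bsub>G\<^esub> = \<one>\<^bsub>G\<^esub>"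
    using eventually_at_right_less[of 0]
    by (rule eventually_mono) (simp add: group_hom.hom_one[OF graded_group_dilation_hom[OF assms]])
  ultimately have "((\<lambda>r. \<one>\<^bsub>G\<^esub>) \<longlongrightarrow> \<delta> 0 \<one>\<^bsub>G\<^esub>) (at_right (0::real))"
    by (rule Lim_transform_eventually)
  then show ?thesis
    using graded_group_dilation_0[OF assms] by (simp add: tendsto_const_iff)
qed

lemma graded_group_continuous_on_mult:
  assumes "graded_group G \<delta>" "continuous_on S f" "continuous_on S g"
  shows "continuous_on S (\<lambda>z. f z \<otimes>\<^bsub>G\<^esub> g z)"
  using continuous_on_compose2[OF graded_group_continuous_mult[OF assms(1)]
      continuous_on_Pair[OF assms(2,3)]]
  by simp

lemma graded_group_continuous_on_inv:
  assumes "graded_group G \<delta>" "continuous_on S f"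
  shows "continuous_on S (\<lambda>z. inv\<^bsub>G\<^esub> f z)"
  using continuous_on_compose2[OF graded_group_continuous_inv[OF assms(1)] assms(2)] by simp

lemma continuous_inj_norm_bounded_below_on_sphere:
  fixes f :: "'a::euclidean_space \<Rightarrow> 'b::real_normed_vector"
  assumes S: "closed S" "0 \<in> S" and f: "continuous_on S f" "inj_on f S" "f 0 = 0" and "\<epsilon> > 0"
  obtains m where "m > 0" "\<And>s. s \<in> S \<Longrightarrow> norm s = \<epsilon> \<Longrightarrow> m \<le> norm (f s)"
proof (cases "S \<inter> sphere 0 \<epsilon> = {}")
  case True
  show thesis by (rule that[of 1]) (use True in auto)
next
  case False
  have "compact (S \<inter> sphere 0 \<epsilon>)" using S(1) by (simp add: closed_Int_compact)
  moreover have "continuous_on (S \<inter> sphere 0 \<epsilon>) (\<lambda>s. norm (f s))"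
    by (rule continuous_on_norm[OF continuous_on_subset[OF f(1)]]) auto
  ultimately obtain s0 where s0: "s0 \<in> S \<inter> sphere 0 \<epsilon>"
    and min: "\<And>s. s \<in> S \<inter> sphere 0 \<epsilon> \<Longrightarrow> norm (f s0) \<le> norm (f s)"
    by (metis continuous_attains_inf False)
  have "s0 \<in> S" "s0 \<noteq> 0" using s0 \<open>\<epsilon> > 0\<close> by auto
  then have "f s0 \<noteq> 0" using inj_onD[OF f(2) _ _ S(2)] f(3) by metis
  then show thesis by (rule that[of "norm (f s0)", OF zero_less_norm_iff[THEN iffD2]]) (simp add: min)
qed

text \<open>Every point outside the \<open>\<epsilon>\<close>-ball has a dilate on the \<open>\<epsilon>\<close>-sphere, where \<open>norm \<circ> f\<close>
  is bounded below; equivariance transports this bound back.\<close>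

lemma inverse_continuous_at_origin_of_dilations:
  fixes f :: "'a::euclidean_space \<Rightarrow> 'b::real_normed_vector"
  assumes S: "closed S" "0 \<in> S" and f: "continuous_on S f" "inj_on f S" "f 0 = 0"
    and dil_S: "\<And>r x. 0 < r \<Longrightarrow> r \<le> 1 \<Longrightarrow> x \<in> S \<Longrightarrow> dA r x \<in> S"
    and equivariant: "\<And>r x. 0 < r \<Longrightarrow> r \<le> 1 \<Longrightarrow> x \<in> S \<Longrightarrow> f (dA r x) = dB r (f x)"
    and dA_cont: "\<And>x. x \<in> S \<Longrightarrow> continuous_on {0<..1} (\<lambda>r. dA r x)"
    and dA_1: "\<And>x. dA 1 x = x"
    and CA: "CA > 0" "\<And>r x. 0 < r \<Longrightarrow> r \<le> 1 \<Longrightarrow> norm (dA r x) \<le> r * CA * norm x"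
    and CB: "CB > 0" "\<And>r y. 0 < r \<Longrightarrow> r \<le> 1 \<Longrightarrow> norm (dB r y) \<le> r * CB * norm y"
    and "\<epsilon> > 0"
  shows "\<exists>d>0. \<forall>x\<in>S. norm (f x) < d \<longrightarrow> norm x < \<epsilon>"
proof -
  obtain m where m: "m > 0" "\<And>s. s \<in> S \<Longrightarrow> norm s = \<epsilon> \<Longrightarrow> m \<le> norm (f s)"
    using continuous_inj_norm_bounded_below_on_sphere[OF S f \<open>\<epsilon> > 0\<close>] by blast
  have "norm x < \<epsilon>" if x: "x \<in> S" "norm (f x) < m / CB" for x
  proof (rule ccontr)
    assume "\<not> norm x < \<epsilon>"
    then have x_big: "\<epsilon> \<le> norm x" by simp
    then have "norm x > 0" using \<open>\<epsilon> > 0\<close> by linarith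
    with CA(1) have "CA * norm x > 0" by simp
    define a where "a = min 1 (\<epsilon> / (CA * norm x))"
    have a: "0 < a" "a \<le> 1" "a * CA * norm x \<le> \<epsilon>"
      using \<open>CA * norm x > 0\<close> \<open>\<epsilon> > 0\<close> unfolding a_def
      by (auto simp: min_def mult.assoc pos_le_divide_eq[symmetric])
    have "norm (dA a x) \<le> \<epsilon>" using CA(2)[OF a(1,2), of x] a(3) by simp
    moreover have "continuous_on {a..1} (\<lambda>r. norm (dA r x))"
      by (rule continuous_on_norm[OF continuous_on_subset[OF dA_cont[OF x(1)]]]) (use a in auto)
    ultimately obtain r where r: "a \<le> r" "r \<le> 1" "norm (dA r x) = \<epsilon>"
      using IVT'[of "\<lambda>r. norm (dA r x)" a \<epsilon> 1] a x_big dA_1 by auto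
    then have r_pos: "0 < r" using a by simp
    have "m \<le> norm (f (dA r x))" by (rule m(2)[OF dil_S[OF r_pos r(2) x(1)] r(3)])
    also have "\<dots> \<le> r * CB * norm (f x)" using equivariant[OF r_pos r(2) x(1)] CB(2)[OF r_pos r(2)] by simp
    also have "\<dots> \<le> CB * norm (f x)"
      using r(2) CB(1) by (intro mult_right_mono mult_right_le_one_le) (auto simp: r_pos less_imp_le)
    also have "\<dots> < m" using x(2) CB(1) by (simp add: field_simps)
    finally show False by simp
  qed
  then show ?thesis using m(1) CB(1) by (intro exI[of _ "m / CB"]) auto
qed

text \<open>Continuity of the inverse at one point is transported to every point by the
  continuous maps \<open>a\<close> and \<open>b\<close>, which play the role of left translations.\<close>

lemma continuous_on_inv_into_by_translations:
  fixes f :: "'a::real_normed_vector \<Rightarrow> 'b::real_normed_vector"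
  assumes inj: "inj_on f S"
    and at_origin: "\<And>\<epsilon>. \<epsilon> > 0 \<Longrightarrow> \<exists>d>0. \<forall>u\<in>S. norm (f u) < d \<longrightarrow> norm u < \<epsilon>"
    and translate: "\<And>x0. x0 \<in> S \<Longrightarrow> \<exists>a b. continuous_on UNIV a \<and> a (f x0) = 0 \<and>
         continuous_on UNIV b \<and> b 0 = x0 \<and> (\<forall>x\<in>S. \<exists>u\<in>S. f u = a (f x) \<and> x = b u)"
  shows "continuous_on (f ` S) (inv_into S f)"
  unfolding continuous_on_iff
proof (intro ballI allI impI)
  fix y e assume "y \<in> f ` S" and e: "(0::real) < e"
  then obtain x0 where x0: "x0 \<in> S" "y = f x0" by auto
  obtain a b where ab: "continuous_on UNIV a" "a (f x0) = 0" "continuous_on UNIV b" "b 0 = x0"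
     "\<forall>x\<in>S. \<exists>u\<in>S. f u = a (f x) \<and> x = b u"
    using translate[OF x0(1)] by blast
  then have ab_cont: "isCont a (f x0)" "isCont b 0"
    by (simp_all add: continuous_on_eq_continuous_at)
  obtain \<epsilon> where \<epsilon>: "\<epsilon> > 0" "\<And>u. dist u 0 < \<epsilon> \<Longrightarrow> dist (b u) x0 < e"
    using ab_cont(2) ab(4) e unfolding continuous_at_eps_delta by metis
  obtain d1 where d1: "d1 > 0" "\<forall>u\<in>S. norm (f u) < d1 \<longrightarrow> norm u < \<epsilon>"
    using at_origin[OF \<epsilon>(1)] by blast
  obtain d where d: "d > 0" "\<And>y'. dist y' (f x0) < d \<Longrightarrow> dist (a y') 0 < d1"
    using ab_cont(1) ab(2) d1(1) unfolding continuous_at_eps_delta by metis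
  have "dist (inv_into S f y') (inv_into S f y) < e" if y': "y' \<in> f ` S" "dist y' y < d" for y'
  proof -
    obtain x where x: "x \<in> S" "y' = f x" using y'(1) by auto
    obtain u where u: "u \<in> S" "f u = a (f x)" "x = b u" using ab(5) x(1) by blast
    have "norm (f u) < d1" using d(2)[of "f x"] y'(2) x u(2) x0(2) by simp
    then have "dist (b u) x0 < e" using d1(2) u(1) \<epsilon>(2) by simp
    then show ?thesis using x x0 u(3) inj by (simp add: inv_into_f_f)
  qed
  then show "\<exists>d>0. \<forall>y'\<in>f ` S. dist y' y < d \<longrightarrow> dist (inv_into S f y') (inv_into S f y) < e"
    using d(1) by blast
qed

lemma
  assumes gG: "graded_group G \<delta>G" and gM: "graded_group M \<delta>M" and T: "h_hom G \<delta>G M \<delta>M T"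
  shows h_hom_group_hom: "group_hom G M T"
    and h_hom_mult: "T (x \<otimes>\<^bsub>G\<^esub> y) = T x \<otimes>\<^bsub>M\<^esub> T y"
    and h_hom_inv: "T (inv\<^bsub>G\<^esub> x) = inv\<^bsub>M\<^esub> T x"
    and h_hom_zero: "T 0 = 0"
    and h_hom_continuous: "continuous_on UNIV T"
    and h_hom_dilation: "r > 0 \<Longrightarrow> T (\<delta>G r x) = \<delta>M r (T x)"
proof -
  show hom: "group_hom G M T"
    using graded_group_group[OF gG] graded_group_group[OF gM] T
    unfolding h_hom_def group_hom_def group_hom_axioms_def by blast
  show "T (x \<otimes>\<^bsub>G\<^esub> y) = T x \<otimes>\<^bsub>M\<^esub> T y" "T (inv\<^bsub>G\<^esub> x) = inv\<^bsub>M\<^esub> T x"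
    using group_hom.hom_mult[OF hom] group_hom.hom_inv[OF hom] graded_group_carrier[OF gG] by simp_all
  show "T 0 = 0"
    using group_hom.hom_one[OF hom] graded_group_one[OF gG] graded_group_one[OF gM] by simp
  show "continuous_on UNIV T" "r > 0 \<Longrightarrow> T (\<delta>G r x) = \<delta>M r (T x)"
    using T graded_group_carrier[OF gG] unfolding h_hom_def by simp_all
qed

lemma h_hom_compose:
  assumes "h_hom G \<delta>G M \<delta>M f" "h_hom M \<delta>M K \<delta>K g"
  shows "h_hom G \<delta>G K \<delta>K (g \<circ> f)"
proof -
  have f_img: "f ` carrier G \<subseteq> carrier M" using assms(1) unfolding h_hom_def hom_def by auto
  have "g \<circ> f \<in> hom G K" using assms unfolding h_hom_def by (blast intro: hom_compose)
  moreover have "continuous_on (carrier G) (g \<circ> f)"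
    using assms f_img unfolding h_hom_def by (blast intro: continuous_on_compose continuous_on_subset)
  moreover have "\<forall>r>0. \<forall>x\<in>carrier G. (g \<circ> f) (\<delta>G r x) = \<delta>K r ((g \<circ> f) x)"
    using assms f_img unfolding h_hom_def by auto
  ultimately show ?thesis unfolding h_hom_def by blast
qed

lemma h_hom_corestrict:
  assumes "h_hom G \<delta>G M \<delta>M f" "f ` carrier G \<subseteq> H"
  shows "h_hom G \<delta>G (M\<lparr>carrier := H\<rparr>) \<delta>M f"
  using assms unfolding h_hom_def hom_def by auto

lemma h_hom_inclusion:
  assumes "H \<subseteq> carrier M"
  shows "h_hom (M\<lparr>carrier := H\<rparr>) \<delta> M \<delta> id"
  using assms unfolding h_hom_def hom_def by auto

lemma mult_subgroup_inverse_continuous_at_origin: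
  fixes G :: "'g::euclidean_space monoid" and M :: "'m::euclidean_space monoid"
  assumes gG: "graded_group G \<delta>G" and gM: "graded_group M \<delta>M" and T: "h_hom G \<delta>G M \<delta>M T"
    and N: "subgroup N M" "closed N" "\<And>r. r > 0 \<Longrightarrow> \<delta>M r ` N \<subseteq> N"
    and inj: "inj_on (\<lambda>z. fst z \<otimes>\<^bsub>M\<^esub> T (snd z)) (N \<times> UNIV)"
    and "\<epsilon> > 0"
  shows "\<exists>d>0. \<forall>z\<in>N \<times> UNIV. norm (fst z \<otimes>\<^bsub>M\<^esub> T (snd z)) < d \<longrightarrow> norm z < \<epsilon>"
proof -
  interpret M: group M by (rule graded_group_group[OF gM])
  have carrier[simp]: "carrier M = UNIV" by (rule graded_group_carrier[OF gM])
  let ?f = "\<lambda>z. fst z \<otimes>\<^bsub>M\<^esub> T (snd z)" and ?S = "N \<times> (UNIV :: 'g set)"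
  obtain CG where CG: "CG > 0" "\<And>r x. 0 < r \<Longrightarrow> r \<le> 1 \<Longrightarrow> norm (\<delta>G r x) \<le> r * CG * norm x"
    using graded_group_dilation_bound[OF gG] by blast
  obtain CM where CM: "CM > 0" "\<And>r x. 0 < r \<Longrightarrow> r \<le> 1 \<Longrightarrow> norm (\<delta>M r x) \<le> r * CM * norm x"
    using graded_group_dilation_bound[OF gM] by blast
  define dA where "dA = (\<lambda>r z. (\<delta>M r (fst z), \<delta>G r (snd z)))"
  show ?thesis
  proof (rule inverse_continuous_at_origin_of_dilations[where dA = dA and dB = \<delta>M and CA = "CM + CG"])
    show "closed ?S" using N(2) by (intro closed_Times) auto
    show "0 \<in> ?S" using subgroup.one_closed[OF N(1)] graded_group_one[OF gM] by (simp add: zero_prod_def)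
    show "continuous_on ?S ?f"
      by (intro graded_group_continuous_on_mult[OF gM] continuous_intros
          continuous_on_compose2[OF h_hom_continuous[OF gG gM T]]) auto
    show "?f 0 = 0"
      using h_hom_zero[OF gG gM T] graded_group_one[OF gM] M.l_one[of 0] by (simp add: zero_prod_def)
    show "dA r z \<in> ?S" if "0 < r" "z \<in> ?S" for r z
      using N(3)[OF that(1)] that(2) unfolding dA_def image_subset_iff by (simp add: mem_Times_iff)
    show "?f (dA r z) = \<delta>M r (?f z)" if "0 < r" for r z
      using group_hom.hom_mult[OF graded_group_dilation_hom[OF gM that]]
      unfolding dA_def by (simp add: h_hom_dilation[OF gG gM T that])
    show "continuous_on {0<..1} (\<lambda>r. dA r z)" for z
      unfolding dA_def
      by (intro continuous_on_Pair graded_group_continuous_dilation[OF gM] graded_group_continuous_dilation[OF gG])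
    show "dA 1 z = z" for z
      unfolding dA_def by (simp add: graded_group_dilation_1[OF gM] graded_group_dilation_1[OF gG])
    show "norm (dA r z) \<le> r * (CM + CG) * norm z" if r: "0 < r" "r \<le> 1" for r z
    proof -
      have "norm (dA r z) \<le> r * CM * norm (fst z) + r * CG * norm (snd z)"
        using norm_Pair_le[of "\<delta>M r (fst z)" "\<delta>G r (snd z)"] CM(2)[OF r, of "fst z"] CG(2)[OF r, of "snd z"]
        unfolding dA_def by linarith
      also have "\<dots> \<le> r * CM * norm z + r * CG * norm z"
        using r CM(1) CG(1) norm_fst_le[of "fst z" "snd z"] norm_snd_le[of "snd z" "fst z"]
        by (intro add_mono mult_left_mono) auto
      finally show ?thesis by (simp add: algebra_simps)
    qed
  qed (use inj CM CG \<open>\<epsilon> > 0\<close> in auto)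
qed

text \<open>Left translations in \<open>M\<close> lift to \<open>N \<times> G\<close> because \<open>N\<close> is normal.\<close>

lemma continuous_on_inv_into_mult_normal_subgroup:
  fixes G :: "'g::euclidean_space monoid" and M :: "'m::euclidean_space monoid"
  assumes gG: "graded_group G \<delta>G" and gM: "graded_group M \<delta>M" and T: "h_hom G \<delta>G M \<delta>M T"
    and N: "N \<lhd> M" "closed N" "\<And>r. r > 0 \<Longrightarrow> \<delta>M r ` N \<subseteq> N"
    and inj: "inj_on (\<lambda>z. fst z \<otimes>\<^bsub>M\<^esub> T (snd z)) (N \<times> UNIV)"
  shows "continuous_on ((\<lambda>z. fst z \<otimes>\<^bsub>M\<^esub> T (snd z)) ` (N \<times> UNIV))
           (inv_into (N \<times> UNIV) (\<lambda>z. fst z \<otimes>\<^bsub>M\<^esub> T (snd z)))"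
    (is "continuous_on (?f ` ?S) _")
proof (rule continuous_on_inv_into_by_translations[OF inj])
  interpret M: group M by (rule graded_group_group[OF gM])
  interpret G: group G by (rule graded_group_group[OF gG])
  interpret N: normal N M by (rule N(1))
  have carrier[simp]: "carrier M = UNIV" "carrier G = UNIV"
    using graded_group_carrier gM gG by blast+
  note T_simps[simp] = h_hom_mult[OF gG gM T] h_hom_inv[OF gG gM T]
  show "\<exists>d>0. \<forall>u\<in>?S. norm (?f u) < d \<longrightarrow> norm u < \<epsilon>" if "\<epsilon> > 0" for \<epsilon>
    using mult_subgroup_inverse_continuous_at_origin[OF gG gM T N.subgroup_axioms N(2,3) inj that] .
  fix z0 assume "z0 \<in> ?S"
  then obtain n0 g0 where z0: "z0 = (n0, g0)" "n0 \<in> N" by auto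
  define b where "b = (\<lambda>u. (n0 \<otimes>\<^bsub>M\<^esub> (T g0 \<otimes>\<^bsub>M\<^esub> fst u \<otimes>\<^bsub>M\<^esub> inv\<^bsub>M\<^esub> T g0), g0 \<otimes>\<^bsub>G\<^esub> snd u))"
  have "\<exists>u\<in>?S. ?f u = inv\<^bsub>M\<^esub> ?f z0 \<otimes>\<^bsub>M\<^esub> ?f z \<and> z = b u" if z: "z \<in> ?S" for z
  proof -
    obtain n x where z: "z = (n, x)" "n \<in> N" using z by auto
    define u where "u = (inv\<^bsub>M\<^esub> T g0 \<otimes>\<^bsub>M\<^esub> (inv\<^bsub>M\<^esub> n0 \<otimes>\<^bsub>M\<^esub> n) \<otimes>\<^bsub>M\<^esub> T g0, inv\<^bsub>G\<^esub> g0 \<otimes>\<^bsub>G\<^esub> x)"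
    have "u \<in> ?S"
      using N.inv_op_closed1 z z0 unfolding u_def by auto
    moreover have "?f u = inv\<^bsub>M\<^esub> ?f z0 \<otimes>\<^bsub>M\<^esub> ?f z"
      unfolding u_def z z0 by (simp add: M.m_assoc M.inv_mult_group)
    moreover have "z = b u"
      unfolding b_def u_def z z0 by (simp add: M.m_assoc G.m_assoc)
    ultimately show ?thesis by blast
  qed
  moreover have "continuous_on UNIV b"
    unfolding b_def
    by (intro continuous_on_Pair graded_group_continuous_on_mult[OF gM] graded_group_continuous_on_mult[OF gG]
        continuous_intros)
  moreover have "b 0 = z0"
    unfolding b_def z0 using graded_group_one[OF gM] graded_group_one[OF gG]
    by (metis M.r_inv M.r_one G.r_one UNIV_I carrier fst_zero snd_zero)
  moreover have "continuous_on UNIV (\<lambda>y. inv\<^bsub>M\<^esub> ?f z0 \<otimes>\<^bsub>M\<^esub> y)"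
    by (intro graded_group_continuous_on_mult[OF gM] continuous_intros)
  moreover have "inv\<^bsub>M\<^esub> ?f z0 \<otimes>\<^bsub>M\<^esub> ?f z0 = 0"
    using graded_group_one[OF gM] by simp
  ultimately show "\<exists>a b. continuous_on UNIV a \<and> a (?f z0) = 0 \<and> continuous_on UNIV b \<and> b 0 = z0 \<and>
      (\<forall>z\<in>?S. \<exists>u\<in>?S. ?f u = a (?f z) \<and> z = b u)"
    by blast
qed

text \<open>\<open>T\<close> is the multiplication map \<open>(n, x) \<mapsto> n T(x)\<close> for the trivial normal subgroup \<open>{\<one>}\<close>.\<close>

lemma h_hom_inv_into:
  fixes G :: "'g::euclidean_space monoid"
  assumes gG: "graded_group G \<delta>G" and gM: "graded_group M \<delta>M" and T: "h_hom G \<delta>G M \<delta>M T"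
    and inj: "inj T"
  shows "h_hom (M\<lparr>carrier := range T\<rparr>) \<delta>M G \<delta>G (inv_into UNIV T)"
proof -
  interpret M: group M by (rule graded_group_group[OF gM])
  have carrier[simp]: "carrier M = UNIV" "carrier G = UNIV"
    using graded_group_carrier gM gG by blast+
  let ?f = "\<lambda>z. fst z \<otimes>\<^bsub>M\<^esub> T (snd z)" and ?S = "{\<one>\<^bsub>M\<^esub>} \<times> (UNIV :: 'g set)"
  have inj_f: "inj_on ?f ?S"
  proof (rule inj_onI)
    fix z z' assume "z \<in> ?S" "z' \<in> ?S" and eq: "?f z = ?f z'"
    then obtain x x' where "z = (\<one>\<^bsub>M\<^esub>, x)" "z' = (\<one>\<^bsub>M\<^esub>, x')" by blast
    with eq show "z = z'" by (simp add: inj_eq[OF inj])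
  qed
  have f_S: "?f ` ?S = range T"
  proof (intro equalityI subsetI)
    fix y assume "y \<in> range T"
    then obtain x where "y = T x" by blast
    then have "y = ?f (\<one>\<^bsub>M\<^esub>, x)" by simp
    then show "y \<in> ?f ` ?S" by (intro rev_image_eqI[of "(\<one>\<^bsub>M\<^esub>, x)"]) auto
  qed auto
  have inv_f: "inv_into ?S ?f (T x) = (\<one>\<^bsub>M\<^esub>, x)" for x
    using inv_into_f_f[OF inj_f, of "(\<one>\<^bsub>M\<^esub>, x)"] by simp
  have "continuous_on (?f ` ?S) (inv_into ?S ?f)"
  proof (rule continuous_on_inv_into_mult_normal_subgroup[OF gG gM T M.one_is_normal _ _ inj_f])
    show "\<delta>M r ` {\<one>\<^bsub>M\<^esub>} \<subseteq> {\<one>\<^bsub>M\<^esub>}" if "r > 0" for r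
      using group_hom.hom_one[OF graded_group_dilation_hom[OF gM that]] by simp
  qed simp
  then have "continuous_on (range T) (\<lambda>y. snd (inv_into ?S ?f y))"
    unfolding f_S by (rule continuous_on_compose2[OF continuous_on_snd]) auto
  then have "continuous_on (range T) (inv_into UNIV T)"
    by (rule continuous_on_eq) (auto simp: inv_f inj)
  then show ?thesis
    unfolding h_hom_def hom_def
    by (auto simp: inj h_hom_mult[OF gG gM T, symmetric] h_hom_dilation[OF gG gM T, symmetric])
qed

lemma h_epi_of_retraction:
  assumes "h_hom M \<delta> (M\<lparr>carrier := H\<rparr>) \<delta> p" "\<forall>h\<in>H. p h = h" "H \<subseteq> carrier M"
  shows "h_epi M \<delta> (M\<lparr>carrier := H\<rparr>) \<delta> p"
  using assms h_hom_inclusion[OF assms(3)] unfolding h_epi_def by (intro conjI exI[of _ id]) auto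

lemma h_mono_imp_retraction:
  assumes "h_mono G \<delta>G M \<delta>M T"
  shows "\<exists>p. h_epi M \<delta>M (M\<lparr>carrier := T ` carrier G\<rparr>) \<delta>M p \<and> (\<forall>h\<in>T ` carrier G. p h = h)"
proof -
  obtain g where T: "h_hom G \<delta>G M \<delta>M T" and g: "h_hom M \<delta>M G \<delta>G g"
    and gT: "\<forall>x\<in>carrier G. g (T x) = x"
    using assms unfolding h_mono_def by blast
  have T_img: "T ` carrier G \<subseteq> carrier M" using T unfolding h_hom_def hom_def by auto
  have "h_hom M \<delta>M (M\<lparr>carrier := T ` carrier G\<rparr>) \<delta>M (T \<circ> g)"
    by (rule h_hom_compose[OF g h_hom_corestrict[OF T order_refl]])
  moreover have "\<forall>h\<in>T ` carrier G. (T \<circ> g) h = h" using gT by auto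
  ultimately show ?thesis using h_epi_of_retraction T_img by blast
qed

lemma retraction_imp_h_mono:
  assumes gG: "graded_group G \<delta>G" and gM: "graded_group M \<delta>M" and T: "h_hom G \<delta>G M \<delta>M T"
    and inj: "inj T"
    and p: "h_hom M \<delta>M (M\<lparr>carrier := range T\<rparr>) \<delta>M p" "\<forall>h\<in>range T. p h = h"
  shows "h_mono G \<delta>G M \<delta>M T"
proof -
  have "h_hom M \<delta>M G \<delta>G (inv_into UNIV T \<circ> p)"
    by (rule h_hom_compose[OF p(1) h_hom_inv_into[OF gG gM T inj]])
  moreover have "\<forall>x\<in>carrier G. (inv_into UNIV T \<circ> p) (T x) = x"
    using p(2) inj by simp
  ultimately show ?thesis using T unfolding h_mono_def by blast
qed

lemma h_hom_group_hom_subgroup: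
  assumes "graded_group M \<delta>" "subgroup H M" "h_hom M \<delta> (M\<lparr>carrier := H\<rparr>) \<delta> p"
  shows "group_hom M (M\<lparr>carrier := H\<rparr>) p"
  using assms subgroup.subgroup_is_group[OF assms(2) graded_group_group[OF assms(1)]]
  unfolding h_hom_def group_hom_def group_hom_axioms_def by (blast intro: graded_group_group)

lemma retraction_kernel_mem:
  assumes "group_hom M (M\<lparr>carrier := H\<rparr>) p" "subgroup H M" "\<forall>h\<in>H. p h = h" "m \<in> carrier M"
  shows "m \<otimes>\<^bsub>M\<^esub> inv\<^bsub>M\<^esub> p m \<in> kernel M (M\<lparr>carrier := H\<rparr>) p"
proof -
  interpret p: group_hom M "M\<lparr>carrier := H\<rparr>" p by fact
  have pm: "p m \<in> H" using p.hom_closed assms(4) by simp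
  then have inv_pm: "inv\<^bsub>M\<^esub> p m \<in> H" by (rule subgroup.m_inv_closed[OF assms(2)])
  have "p (m \<otimes>\<^bsub>M\<^esub> inv\<^bsub>M\<^esub> p m) = p m \<otimes>\<^bsub>M\<^esub> inv\<^bsub>M\<^esub> p m"
    using p.hom_mult[OF assms(4) subgroup.mem_carrier[OF assms(2) inv_pm]] assms(3) inv_pm by simp
  also have "\<dots> = \<one>\<^bsub>M\<^esub>" using subgroup.mem_carrier[OF assms(2) pm] by simp
  finally show ?thesis
    using assms(4) subgroup.mem_carrier[OF assms(2) inv_pm] unfolding kernel_def by simp
qed

lemma retraction_kernel_complementary:
  assumes "group_hom M (M\<lparr>carrier := H\<rparr>) p" "subgroup H M" "\<forall>h\<in>H. p h = h"
  shows "complementary M (kernel M (M\<lparr>carrier := H\<rparr>) p) H"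
proof -
  interpret p: group_hom M "M\<lparr>carrier := H\<rparr>" p by fact
  let ?N = "kernel M (M\<lparr>carrier := H\<rparr>) p"
  have "m \<in> ?N <#>\<^bsub>M\<^esub> H" if m: "m \<in> carrier M" for m
  proof -
    have "p m \<in> H" using p.hom_closed m by simp
    then have "m = (m \<otimes>\<^bsub>M\<^esub> inv\<^bsub>M\<^esub> p m) \<otimes>\<^bsub>M\<^esub> p m"
      using m assms(2) subgroup.subset by (fastforce simp: p.G.m_assoc)
    then show ?thesis
      unfolding set_mult_def using retraction_kernel_mem[OF assms m] \<open>p m \<in> H\<close> by blast
  qed
  moreover have "?N <#>\<^bsub>M\<^esub> H \<subseteq> carrier M"
    using p.subgroup_kernel assms(2) by (simp add: p.G.set_mult_closed subgroup.subset)
  moreover have "?N \<inter> H = {\<one>\<^bsub>M\<^esub>}"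
    using assms(3) subgroup.one_closed[OF assms(2)] unfolding kernel_def by auto
  ultimately show ?thesis unfolding complementary_def by blast
qed

text \<open>The kernel is contractible as a retract of \<open>M = \<real>\<^sup>n\<close>, via \<open>m \<mapsto> m p(m)\<^sup>-\<^sup>1\<close>.\<close>

lemma retraction_kernel_homogeneous_subgroup:
  assumes gM: "graded_group M \<delta>" and H: "subgroup H M"
    and p: "h_hom M \<delta> (M\<lparr>carrier := H\<rparr>) \<delta> p" and p_id: "\<forall>h\<in>H. p h = h"
  shows "homogeneous_subgroup M \<delta> (kernel M (M\<lparr>carrier := H\<rparr>) p)"
proof -
  interpret p: group_hom M "M\<lparr>carrier := H\<rparr>" p by (rule h_hom_group_hom_subgroup[OF gM H p])
  have carrier[simp]: "carrier M = UNIV" using graded_group_carrier[OF gM] .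
  define N where "N = kernel M (M\<lparr>carrier := H\<rparr>) p"
  have N_eq: "N = {m. p m = \<one>\<^bsub>M\<^esub>}" unfolding N_def kernel_def by simp
  have p_cont: "continuous_on UNIV p" using p unfolding h_hom_def by simp
  have "N retract_of UNIV"
    unfolding retract_of_def retraction_def
  proof (intro exI[of _ "\<lambda>m. m \<otimes>\<^bsub>M\<^esub> inv\<^bsub>M\<^esub> p m"] conjI)
    show "continuous_on UNIV (\<lambda>m. m \<otimes>\<^bsub>M\<^esub> inv\<^bsub>M\<^esub> p m)"
      by (intro graded_group_continuous_on_mult[OF gM] graded_group_continuous_on_inv[OF gM]
          continuous_on_id p_cont)
    show "(\<lambda>m. m \<otimes>\<^bsub>M\<^esub> inv\<^bsub>M\<^esub> p m) \<in> UNIV \<rightarrow> N"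
      using retraction_kernel_mem[OF p.group_hom_axioms H p_id] unfolding N_def by auto
  qed (auto simp: N_eq)
  then have "contractible N"
    by (rule retract_of_contractible[OF convex_imp_contractible[OF convex_UNIV]])
  moreover have "closed N"
    unfolding N_eq by (rule closed_Collect_eq[OF p_cont continuous_on_const])
  moreover have "\<delta> s ` N \<subseteq> N" if "s > 0" for s
    using that p group_hom.hom_one[OF graded_group_dilation_hom[OF gM that]]
    unfolding N_eq h_hom_def by auto
  ultimately show ?thesis
    unfolding homogeneous_subgroup_def N_def[symmetric]
    using p.subgroup_kernel contractible_imp_connected contractible_imp_simply_connected
    by (auto simp: N_def)
qed

lemma complementary_mult_bij:
  assumes M: "group M" "carrier M = UNIV" and N: "subgroup N M" and H: "subgroup (range T) M"
    and comp: "complementary M N (range T)" and inj: "inj T"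
  shows "bij_betw (\<lambda>z. fst z \<otimes>\<^bsub>M\<^esub> T (snd z)) (N \<times> UNIV) UNIV"
proof -
  interpret M: group M by (rule M(1))
  have "inj_on (\<lambda>z. fst z \<otimes>\<^bsub>M\<^esub> T (snd z)) (N \<times> UNIV)"
  proof (rule inj_onI, clarsimp)
    fix n x n' x' assume n: "n \<in> N" "n' \<in> N" and eq: "n \<otimes>\<^bsub>M\<^esub> T x = n' \<otimes>\<^bsub>M\<^esub> T x'"
    have "inv\<^bsub>M\<^esub> n' \<otimes>\<^bsub>M\<^esub> n = T x' \<otimes>\<^bsub>M\<^esub> inv\<^bsub>M\<^esub> T x"
      using eq M(2) by (metis M.inv_solve_left' M.inv_solve_right M.m_assoc M.m_closed M.inv_closed UNIV_I)
    moreover have "inv\<^bsub>M\<^esub> n' \<otimes>\<^bsub>M\<^esub> n \<in> N" using n N by (simp add: subgroup.m_closed subgroup.m_inv_closed)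
    moreover have "T x' \<otimes>\<^bsub>M\<^esub> inv\<^bsub>M\<^esub> T x \<in> range T" using H by (simp add: subgroup.m_closed subgroup.m_inv_closed)
    ultimately have trivial: "inv\<^bsub>M\<^esub> n' \<otimes>\<^bsub>M\<^esub> n = \<one>\<^bsub>M\<^esub>" "T x' \<otimes>\<^bsub>M\<^esub> inv\<^bsub>M\<^esub> T x = \<one>\<^bsub>M\<^esub>"
      using comp unfolding complementary_def by auto
    from trivial(1) have "n' \<otimes>\<^bsub>M\<^esub> (inv\<^bsub>M\<^esub> n' \<otimes>\<^bsub>M\<^esub> n) = n' \<otimes>\<^bsub>M\<^esub> \<one>\<^bsub>M\<^esub>" by simp
    then have "n = n'" using M(2) by simp
    from trivial(2) have "(T x' \<otimes>\<^bsub>M\<^esub> inv\<^bsub>M\<^esub> T x) \<otimes>\<^bsub>M\<^esub> T x = \<one>\<^bsub>M\<^esub> \<otimes>\<^bsub>M\<^esub> T x" by simp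
    then have "T x = T x'" using M(2) by (simp add: M.m_assoc)
    with \<open>n = n'\<close> show "n = n' \<and> x = x'" using inj by (simp add: inj_eq)
  qed
  moreover have "m \<in> (\<lambda>z. fst z \<otimes>\<^bsub>M\<^esub> T (snd z)) ` (N \<times> UNIV)" for m
  proof -
    have "m \<in> N <#>\<^bsub>M\<^esub> range T" using comp M(2) unfolding complementary_def by simp
    then obtain n x where "n \<in> N" "m = n \<otimes>\<^bsub>M\<^esub> T x" unfolding set_mult_def by blast
    then show ?thesis by (intro rev_image_eqI[of "(n, x)"]) auto
  qed
  ultimately show ?thesis unfolding bij_betw_def by blast
qed

lemma normal_complement_projection_mult:
  assumes "group M" "N \<lhd> M" "subgroup H M"
    and p: "\<And>n h. n \<in> N \<Longrightarrow> h \<in> H \<Longrightarrow> p (n \<otimes>\<^bsub>M\<^esub> h) = h"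
    and n: "n1 \<in> N" "n2 \<in> N" and h: "h1 \<in> H" "h2 \<in> H"
  shows "p ((n1 \<otimes>\<^bsub>M\<^esub> h1) \<otimes>\<^bsub>M\<^esub> (n2 \<otimes>\<^bsub>M\<^esub> h2)) = h1 \<otimes>\<^bsub>M\<^esub> h2"
proof -
  interpret M: group M by fact
  interpret N: normal N M by fact
  interpret H: subgroup H M by fact
  have "(n1 \<otimes>\<^bsub>M\<^esub> h1) \<otimes>\<^bsub>M\<^esub> (n2 \<otimes>\<^bsub>M\<^esub> h2)
      = (n1 \<otimes>\<^bsub>M\<^esub> (h1 \<otimes>\<^bsub>M\<^esub> n2 \<otimes>\<^bsub>M\<^esub> inv\<^bsub>M\<^esub> h1)) \<otimes>\<^bsub>M\<^esub> (h1 \<otimes>\<^bsub>M\<^esub> h2)"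
    using n h by (simp add: M.m_assoc)
  moreover have "n1 \<otimes>\<^bsub>M\<^esub> (h1 \<otimes>\<^bsub>M\<^esub> n2 \<otimes>\<^bsub>M\<^esub> inv\<^bsub>M\<^esub> h1) \<in> N"
    using n h N.inv_op_closed2 by simp
  ultimately show ?thesis using p h by simp
qed

lemma complement_imp_retraction:
  fixes G :: "'g::euclidean_space monoid" and M :: "'m::euclidean_space monoid"
  assumes gG: "graded_group G \<delta>G" and gM: "graded_group M \<delta>M" and T: "h_hom G \<delta>G M \<delta>M T"
    and inj: "inj T"
    and N: "homogeneous_subgroup M \<delta>M N" "N \<lhd> M" "complementary M N (range T)"
  shows "\<exists>p. h_hom M \<delta>M (M\<lparr>carrier := range T\<rparr>) \<delta>M p \<and> (\<forall>h\<in>range T. p h = h)"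
proof -
  interpret M: group M by (rule graded_group_group[OF gM])
  interpret G: group G by (rule graded_group_group[OF gG])
  interpret N: normal N M by (rule N(2))
  have carrier[simp]: "carrier M = UNIV" "carrier G = UNIV"
    using graded_group_carrier gM gG by blast+
  have N_dil: "\<delta>M r n \<in> N" if "r > 0" "n \<in> N" for r n
    using N(1) that unfolding homogeneous_subgroup_def by blast
  let ?f = "\<lambda>z. fst z \<otimes>\<^bsub>M\<^esub> T (snd z)" and ?S = "N \<times> (UNIV :: 'g set)"
  have T_range: "subgroup (range T) M"
    using group_hom.img_is_subgroup[OF h_hom_group_hom[OF gG gM T]] by simp
  have bij: "bij_betw ?f ?S UNIV"
    by (rule complementary_mult_bij[OF M.is_group carrier(1) N.subgroup_axioms T_range N(3) inj])
  then have decomp: "\<exists>n\<in>N. \<exists>x. m = n \<otimes>\<^bsub>M\<^esub> T x" for m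
    unfolding bij_betw_def by force
  define p where "p = (\<lambda>m. T (snd (inv_into ?S ?f m)))"
  have p_decomp: "p (n \<otimes>\<^bsub>M\<^esub> T x) = T x" if "n \<in> N" for n x
    using bij_betw_inv_into_left[OF bij, of "(n, x)"] that unfolding p_def by simp
  have "continuous_on UNIV (inv_into ?S ?f)"
    using continuous_on_inv_into_mult_normal_subgroup[OF gG gM T N(2)] N(1) bij
    unfolding homogeneous_subgroup_def bij_betw_def by simp
  then have "continuous_on UNIV p"
    unfolding p_def
    by (intro continuous_on_compose2[OF h_hom_continuous[OF gG gM T]] continuous_on_compose2[OF continuous_on_snd]) auto
  moreover have "p (m1 \<otimes>\<^bsub>M\<^esub> m2) = p m1 \<otimes>\<^bsub>M\<^esub> p m2" for m1 m2
  proof -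
    obtain n1 x1 n2 x2 where n: "n1 \<in> N" "n2 \<in> N" and m: "m1 = n1 \<otimes>\<^bsub>M\<^esub> T x1" "m2 = n2 \<otimes>\<^bsub>M\<^esub> T x2"
      using decomp by meson
    have "p (m1 \<otimes>\<^bsub>M\<^esub> m2) = T x1 \<otimes>\<^bsub>M\<^esub> T x2"
      unfolding m by (rule normal_complement_projection_mult[OF M.is_group N(2) T_range _ n rangeI rangeI])
        (auto simp: p_decomp)
    then show ?thesis using p_decomp n unfolding m by simp
  qed
  moreover have "p (\<delta>M r m) = \<delta>M r (p m)" if "r > 0" for r m
  proof -
    obtain n x where "n \<in> N" "m = n \<otimes>\<^bsub>M\<^esub> T x" using decomp by blast
    then show ?thesis
      using group_hom.hom_mult[OF graded_group_dilation_hom[OF gM that]] N_dil[OF that] p_decomp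
      by (simp add: h_hom_dilation[OF gG gM T that, symmetric])
  qed
  moreover have "p h = h" if "h \<in> range T" for h
    using that p_decomp[OF N.one_closed] by auto
  moreover have "p m \<in> range T" for m unfolding p_def by simp
  ultimately show ?thesis
    unfolding h_hom_def hom_def by (intro exI[of _ p]) auto
qed

theorem proposition7p18:
  fixes G :: "'g::euclidean_space monoid" and \<delta>G :: "real \<Rightarrow> 'g \<Rightarrow> 'g"
    and M :: "'m::euclidean_space monoid" and \<delta>M :: "real \<Rightarrow> 'm \<Rightarrow> 'm"
    and T :: "'g \<Rightarrow> 'm" and H :: "'m set"
  assumes "graded_group G \<delta>G" and "graded_group M \<delta>M"
    and "h_hom G \<delta>G M \<delta>M T" and "inj T"
    and "H = T ` carrier G"
  shows "((\<exists>N. homogeneous_subgroup M \<delta>M N \<and> N \<lhd> M \<and> complementary M N H)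
           \<longleftrightarrow> (\<exists>p. h_epi M \<delta>M (M\<lparr>carrier := H\<rparr>) \<delta>M p \<and> (\<forall>h\<in>H. p h = h)))
       \<and> ((\<exists>p. h_epi M \<delta>M (M\<lparr>carrier := H\<rparr>) \<delta>M p \<and> (\<forall>h\<in>H. p h = h))
           \<longleftrightarrow> h_mono G \<delta>G M \<delta>M T)"
proof -
  have H: "H = range T" using assms(5) graded_group_carrier[OF assms(1)] by simp
  have H_sub: "subgroup H M"
    using group_hom.img_is_subgroup[OF h_hom_group_hom[OF assms(1-3)]] assms(5) by simp
  then have H_carrier: "H \<subseteq> carrier M" by (rule subgroup.subset)
  let ?retraction = "\<exists>p. h_epi M \<delta>M (M\<lparr>carrier := H\<rparr>) \<delta>M p \<and> (\<forall>h\<in>H. p h = h)"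
  have "?retraction" if "homogeneous_subgroup M \<delta>M N" "N \<lhd> M" "complementary M N H" for N
    using complement_imp_retraction[OF assms(1-4) that[unfolded H]] h_epi_of_retraction H_carrier
    unfolding H by blast
  moreover have "\<exists>N. homogeneous_subgroup M \<delta>M N \<and> N \<lhd> M \<and> complementary M N H"
    if "h_epi M \<delta>M (M\<lparr>carrier := H\<rparr>) \<delta>M p" "\<forall>h\<in>H. p h = h" for p
    using that retraction_kernel_homogeneous_subgroup[OF assms(2) H_sub]
      group_hom.normal_kernel[OF h_hom_group_hom_subgroup[OF assms(2) H_sub]]
      retraction_kernel_complementary[OF h_hom_group_hom_subgroup[OF assms(2) H_sub] H_sub]
    unfolding h_epi_def by blast
  moreover have "h_mono G \<delta>G M \<delta>M T"
    if "h_epi M \<delta>M (M\<lparr>carrier := H\<rparr>) \<delta>M p" "\<forall>h\<in>H. p h = h" for p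
    using that retraction_imp_h_mono[OF assms(1-4)] unfolding h_epi_def H by blast
  moreover have "?retraction" if "h_mono G \<delta>G M \<delta>M T"
    using h_mono_imp_retraction[OF that] assms(5) by blast
  ultimately show ?thesis by blast
qed

end
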